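(* Let $X\subseteq\mathbb{R}^d$ be $\mathcal{A}^\infty$-admissible. If $U$ is an open neighborhood of $X$ in $\mathbb{R}^d$ and $\varphi:U\to\mathbb{R}^e$ is a smooth embedding, then $\varphi(X)\subseteq\mathbb{R}^e$ is $\mathcal{A}^\infty$-admissible.
   Context: For $Y\subseteq\mathbb{R}^n$: $\mathcal{A}^\infty(Y)$ is the set of $f:Y\to\mathbb{R}$ such that $f\circ c$ is smooth for every smooth $c:\mathbb{R}\to\mathbb{R}^n$ with $c(\mathbb{R})\subseteq Y$; $\mathcal{C}^\infty(Y)$ is the set of $f:Y\to\mathbb{R}$ such that each $y\in Y$ has an open neighborhood $V$ in $\mathbb{R}^n$ and a smooth $F:V\to\mathbb{R}$ with $F=f$ on $V\cap Y$. $Y$ is $\mathcal{A}^\infty$-admissible if $\mathcal{A}^\infty(Y)=\mathcal{C}^\infty(Y)$. *)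

theory Defs
  imports "HOL-Analysis.Analysis"
begin

text \<open>Taken as a
  greatest fixed point, this says all iterated partial derivatives exist
  (and are differentiable, hence continuous), i.e. F is C-infinity on V.\<close>
coinductive smooth_on :: "'a::euclidean_space set \<Rightarrow> ('a \<Rightarrow> 'b::real_normed_vector) \<Rightarrow> bool"
  for V :: "'a set" where
  "(\<forall>x\<in>V. F differentiable (at x)) \<Longrightarrow>
   (\<forall>b\<in>Basis. smooth_on V (\<lambda>x. frechet_derivative F (at x) b)) \<Longrightarrow>
   smooth_on V F"

text \<open>A-infinity(Y): functions whose composition with every smooth curve in Y is smooth.
  Functions are total; only their values on Y matter.\<close>
definition A_infty :: "'a::euclidean_space set \<Rightarrow> ('a \<Rightarrow> real) set" where
  "A_infty Y = {f. \<forall>c::real \<Rightarrow> 'a. smooth_on UNIV c \<and> range c \<subseteq> Y \<longrightarrow> smooth_on UNIV (f \<circ> c)}"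

definition C_infty :: "'a::euclidean_space set \<Rightarrow> ('a \<Rightarrow> real) set" where
  "C_infty Y = {f. \<forall>y\<in>Y. \<exists>V (F::'a \<Rightarrow> real). open V \<and> y \<in> V \<and> smooth_on V F \<and>
                     (\<forall>z\<in>V \<inter> Y. F z = f z)}"

definition A_infty_admissible :: "'a::euclidean_space set \<Rightarrow> bool" where
  "A_infty_admissible Y \<longleftrightarrow> A_infty Y = C_infty Y"

definition smooth_embedding :: "'a::euclidean_space set \<Rightarrow> ('a \<Rightarrow> 'b::euclidean_space) \<Rightarrow> bool" where
  "smooth_embedding U \<phi> \<longleftrightarrow> smooth_on U \<phi> \<and>
     (\<forall>x\<in>U. inj (frechet_derivative \<phi> (at x))) \<and>
     (\<exists>\<psi>. homeomorphism U (\<phi> ` U) \<phi> \<psi>)"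

end

theory Submission
  imports Defs
begin

text \<open>If \<open>g\<close> is \<open>\<A>\<^sup>\<infinity>\<close> on \<open>\<phi>(X)\<close>, then \<open>g \<circ> \<phi>\<close> is \<open>\<A>\<^sup>\<infinity>\<close> on \<open>X\<close> (compose
  curves with \<open>\<phi>\<close>), hence near each point of \<open>X\<close> the restriction of a smooth \<open>F\<close>.
  An embedding is an immersion, so by the inverse function theorem it has smooth local left
  inverses \<open>\<psi>\<close>; and since it is open onto its image, \<open>F \<circ> \<psi>\<close> is a smooth local extension
  of \<open>g\<close> near each point of \<open>\<phi>(X)\<close>. The converse inclusion \<open>\<C>\<^sup>\<infinity> \<subseteq> \<A>\<^sup>\<infinity>\<close>
  holds for every set.\<close>

section \<open>Calculus of smooth maps\<close>

lemma smooth_on_differentiable: "smooth_on V f \<Longrightarrow> x \<in> V \<Longrightarrow> f differentiable (at x)"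
  by (erule smooth_on.cases) auto

lemma smooth_on_partial_derivative:
  "smooth_on V f \<Longrightarrow> b \<in> Basis \<Longrightarrow> smooth_on V (\<lambda>x. frechet_derivative f (at x) b)"
  by (erule smooth_on.cases) auto

lemma smooth_on_has_derivative:
  "smooth_on V f \<Longrightarrow> x \<in> V \<Longrightarrow> (f has_derivative frechet_derivative f (at x)) (at x)"
  using smooth_on_differentiable frechet_derivative_works by blast

lemma frechet_derivative_apply: "(f has_derivative D) (at x) \<Longrightarrow> frechet_derivative f (at x) v = D v"
  by (simp add: frechet_derivative_at[symmetric])

lemma smooth_on_subset:
  assumes "smooth_on V f" "W \<subseteq> V" shows "smooth_on W f"
  using assms(1)
proof (coinduction arbitrary: f rule: smooth_on.coinduct)
  case (smooth_on f)
  then show ?case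
    using assms(2) by (auto intro: smooth_on_differentiable smooth_on_partial_derivative)
qed

lemma smooth_on_local:
  assumes "\<And>x. x \<in> V \<Longrightarrow> \<exists>W. open W \<and> x \<in> W \<and> smooth_on W f"
  shows "smooth_on V f"
  using assms
proof (coinduction arbitrary: f rule: smooth_on.coinduct)
  case (smooth_on f)
  have "f differentiable at x" if "x \<in> V" for x
    using smooth_on that smooth_on_differentiable by blast
  moreover have "\<exists>W. open W \<and> x \<in> W \<and> smooth_on W (\<lambda>x. frechet_derivative f (at x) b)"
    if "b \<in> Basis" "x \<in> V" for b x
    using smooth_on that smooth_on_partial_derivative by blast
  ultimately show ?case by blast
qed

lemma smooth_on_class_coinduct:
  assumes V: "open V" and "P f"
    and differentiable: "\<And>f x. P f \<Longrightarrow> x \<in> V \<Longrightarrow> f differentiable at x"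
    and partial: "\<And>f b. P f \<Longrightarrow> b \<in> Basis \<Longrightarrow>
      \<exists>g. P g \<and> (\<forall>x\<in>V. frechet_derivative f (at x) b = g x)"
  shows "smooth_on V f"
proof -
  from \<open>P f\<close> have "\<exists>g. P g \<and> (\<forall>x\<in>V. f x = g x)" by auto
  then show ?thesis
  proof (coinduction arbitrary: f rule: smooth_on.coinduct)
    case (smooth_on h)
    then obtain g where g: "P g" "\<forall>x\<in>V. h x = g x" by auto
    have "(h has_derivative frechet_derivative g (at x)) (at x)" if "x \<in> V" for x
      using differentiable[OF g(1) that] g(2) V that
      by (metis frechet_derivative_works has_derivative_transform_within_open)
    then have "h differentiable at x \<and> frechet_derivative h (at x) = frechet_derivative g (at x)"
      if "x \<in> V" for x
      using that by (metis differentiableI frechet_derivative_at)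
    then show ?case using partial[OF g(1)] by metis
  qed
qed

lemma smooth_on_cong:
  fixes g :: "'a::euclidean_space \<Rightarrow> 'b::real_normed_vector"
  assumes V: "open V" and "smooth_on V f" and eq: "\<And>x. x \<in> V \<Longrightarrow> f x = g x"
  shows "smooth_on V g"
proof (rule smooth_on_class_coinduct[OF V, where P="\<lambda>h. \<exists>f. smooth_on V f \<and> (\<forall>x\<in>V. h x = f x)"])
  fix h :: "'a \<Rightarrow> 'b" and x assume "\<exists>f. smooth_on V f \<and> (\<forall>x\<in>V. h x = f x)" "x \<in> V"
  then show "h differentiable at x"
    using V by (metis differentiable_def has_derivative_transform_within_open smooth_on_has_derivative)
next
  fix h :: "'a \<Rightarrow> 'b" and b :: 'a assume "\<exists>f. smooth_on V f \<and> (\<forall>x\<in>V. h x = f x)" "b \<in> Basis"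
  then obtain f where f: "smooth_on V f" "\<forall>x\<in>V. h x = f x" by auto
  have "frechet_derivative h (at x) b = frechet_derivative f (at x) b" if "x \<in> V" for x
    using frechet_derivative_transform_within_open[OF smooth_on_differentiable[OF f(1) that] V that, of h]
      f(2) by simp
  then show "\<exists>g. (\<exists>f. smooth_on V f \<and> (\<forall>x\<in>V. g x = f x)) \<and>
      (\<forall>x\<in>V. frechet_derivative h (at x) b = g x)"
    using smooth_on_partial_derivative[OF f(1) \<open>b \<in> Basis\<close>]
    by (intro exI[of _ "\<lambda>x. frechet_derivative f (at x) b"]) auto
qed (use assms in auto)

lemma has_derivative_sum_list:
  assumes "\<And>g. g \<in> set fs \<Longrightarrow> (g has_derivative D g) F"
  shows "((\<lambda>x. \<Sum>g\<leftarrow>fs. g x) has_derivative (\<lambda>v. \<Sum>g\<leftarrow>fs. D g v)) F"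
  using assms by (induction fs) (auto intro!: derivative_eq_intros)

lemma smooth_on_sum_class_coinduct:
  fixes P :: "('a::euclidean_space \<Rightarrow> 'b::real_normed_vector) \<Rightarrow> bool"
  assumes V: "open V" and fs: "set fs \<subseteq> Collect P"
    and differentiable: "\<And>f x. P f \<Longrightarrow> x \<in> V \<Longrightarrow> f differentiable at x"
    and partial: "\<And>f b. P f \<Longrightarrow> b \<in> Basis \<Longrightarrow>
      \<exists>gs. set gs \<subseteq> Collect P \<and> (\<forall>x\<in>V. frechet_derivative f (at x) b = (\<Sum>g\<leftarrow>gs. g x))"
  shows "smooth_on V (\<lambda>x. \<Sum>f\<leftarrow>fs. f x)"
proof (rule smooth_on_class_coinduct[OF V, where P="\<lambda>h. \<exists>fs. set fs \<subseteq> Collect P \<and> h = (\<lambda>x. \<Sum>f\<leftarrow>fs. f x)"])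
  have sum_derivative: "((\<lambda>x. \<Sum>f\<leftarrow>fs. f x) has_derivative
      (\<lambda>v. \<Sum>f\<leftarrow>fs. frechet_derivative f (at x) v)) (at x)"
    if "set fs \<subseteq> Collect P" "x \<in> V" for fs x
    using that differentiable
    by (intro has_derivative_sum_list) (auto simp: frechet_derivative_works[symmetric])
  show "h differentiable at x"
    if "\<exists>fs. set fs \<subseteq> Collect P \<and> h = (\<lambda>x. \<Sum>f\<leftarrow>fs. f x)" "x \<in> V" for h x
    using that sum_derivative differentiableI by blast
  show "\<exists>g. (\<exists>gs. set gs \<subseteq> Collect P \<and> g = (\<lambda>x. \<Sum>g\<leftarrow>gs. g x)) \<and>
      (\<forall>x\<in>V. frechet_derivative h (at x) b = g x)"
    if "\<exists>fs. set fs \<subseteq> Collect P \<and> h = (\<lambda>x. \<Sum>f\<leftarrow>fs. f x)" "b \<in> Basis" for h b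
  proof -
    from that obtain fs where fs: "set fs \<subseteq> Collect P" "h = (\<lambda>x. \<Sum>f\<leftarrow>fs. f x)" by auto
    have "\<forall>f\<in>set fs. \<exists>gs. set gs \<subseteq> Collect P \<and>
        (\<forall>x\<in>V. frechet_derivative f (at x) b = (\<Sum>g\<leftarrow>gs. g x))"
      using partial[OF _ \<open>b \<in> Basis\<close>] fs(1) by auto
    from bchoice[OF this] obtain G where G: "\<forall>f\<in>set fs. set (G f) \<subseteq> Collect P \<and>
        (\<forall>x\<in>V. frechet_derivative f (at x) b = (\<Sum>g\<leftarrow>G f. g x))"
      by blast
    have "frechet_derivative h (at x) b = (\<Sum>g\<leftarrow>concat (map G fs). g x)" if "x \<in> V" for x
    proof -
      have "frechet_derivative h (at x) b = (\<Sum>f\<leftarrow>fs. \<Sum>g\<leftarrow>G f. g x)"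
        unfolding fs(2) using frechet_derivative_apply[OF sum_derivative[OF fs(1) that]] G that
        by (simp cong: map_cong)
      also have "\<dots> = (\<Sum>g\<leftarrow>concat (map G fs). g x)" by (induction fs) auto
      finally show ?thesis .
    qed
    moreover have "set (concat (map G fs)) \<subseteq> Collect P" using G by auto
    ultimately show ?thesis by blast
  qed
qed (use fs in auto)

lemma smooth_on_const: "open V \<Longrightarrow> smooth_on V (\<lambda>x. c)"
  by (rule smooth_on_class_coinduct[where P="\<lambda>f. \<exists>c. f = (\<lambda>x. c)"]) auto

lemma smooth_on_bounded_linear: "open V \<Longrightarrow> bounded_linear L \<Longrightarrow> smooth_on V L"
  by (rule smooth_on.intros)
    (auto simp: frechet_derivative_at[OF bounded_linear_imp_has_derivative, symmetric]
      smooth_on_const bounded_linear_imp_differentiable)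

lemma smooth_on_bounded_linear_comp:
  fixes F :: "'a::euclidean_space \<Rightarrow> 'b::real_normed_vector" and L :: "'b \<Rightarrow> 'c::real_normed_vector"
  assumes V: "open V" and L: "bounded_linear L" and "smooth_on V F"
  shows "smooth_on V (\<lambda>x. L (F x))"
proof (rule smooth_on_class_coinduct[OF V, where P="\<lambda>h. \<exists>F. smooth_on V F \<and> h = (\<lambda>x. L (F x))"])
  have derivative: "((\<lambda>x. L (F x)) has_derivative (\<lambda>v. L (frechet_derivative F (at x) v))) (at x)"
    if "smooth_on V F" "x \<in> V" for F x
    using bounded_linear.has_derivative[OF L smooth_on_has_derivative[OF that]] .
  show "h differentiable at x" if "\<exists>F. smooth_on V F \<and> h = (\<lambda>x. L (F x))" "x \<in> V" for h x
    using that derivative differentiableI by blast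
  show "\<exists>g. (\<exists>F. smooth_on V F \<and> g = (\<lambda>x. L (F x))) \<and> (\<forall>x\<in>V. frechet_derivative h (at x) b = g x)"
    if "\<exists>F. smooth_on V F \<and> h = (\<lambda>x. L (F x))" "b \<in> Basis" for h b
  proof -
    from that obtain F where F: "smooth_on V F" "h = (\<lambda>x. L (F x))" by auto
    have "\<forall>x\<in>V. frechet_derivative h (at x) b = L (frechet_derivative F (at x) b)"
      unfolding F(2) using derivative[OF F(1)] frechet_derivative_apply by blast
    then show ?thesis using smooth_on_partial_derivative[OF F(1) \<open>b \<in> Basis\<close>] by blast
  qed
qed (use assms in auto)

lemma smooth_on_inner_left:
  "open V \<Longrightarrow> smooth_on V F \<Longrightarrow> smooth_on V (\<lambda>x. F x \<bullet> c)"
  using smooth_on_bounded_linear_comp[OF _ bounded_linear_inner_left] .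

lemma smooth_on_sum_list:
  fixes fs :: "('a::euclidean_space \<Rightarrow> 'b::real_normed_vector) list"
  assumes V: "open V" and "\<And>f. f \<in> set fs \<Longrightarrow> smooth_on V f"
  shows "smooth_on V (\<lambda>x. \<Sum>f\<leftarrow>fs. f x)"
proof (rule smooth_on_sum_class_coinduct[OF V, where P="smooth_on V"])
  fix f :: "'a \<Rightarrow> 'b" and b :: 'a assume "smooth_on V f" "b \<in> Basis"
  then show "\<exists>gs. set gs \<subseteq> Collect (smooth_on V) \<and>
      (\<forall>x\<in>V. frechet_derivative f (at x) b = (\<Sum>g\<leftarrow>gs. g x))"
    by (intro exI[of _ "[\<lambda>x. frechet_derivative f (at x) b]"]) (auto intro: smooth_on_partial_derivative)
qed (use assms smooth_on_differentiable in auto)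

lemma smooth_on_add:
  assumes "open V" "smooth_on V f" "smooth_on V g"
  shows "smooth_on V (\<lambda>x. f x + g x)"
proof -
  have "smooth_on V (\<lambda>x. \<Sum>h\<leftarrow>[f, g]. h x)" by (rule smooth_on_sum_list) (use assms in auto)
  then show ?thesis by simp
qed

lemma smooth_on_sum:
  assumes V: "open V" and "finite S" and "\<And>i. i \<in> S \<Longrightarrow> smooth_on V (f i)"
  shows "smooth_on V (\<lambda>x. \<Sum>i\<in>S. f i x)"
  using assms(2,3)
  by (induction S rule: finite_induct) (simp_all add: smooth_on_const smooth_on_add V)

lemma smooth_on_scaleR:
  fixes a :: "'a::euclidean_space \<Rightarrow> real" and v :: "'a \<Rightarrow> 'b::real_normed_vector"
  assumes V: "open V" and "smooth_on V a" "smooth_on V v"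
  shows "smooth_on V (\<lambda>x. a x *\<^sub>R v x)"
proof -
  let ?P = "\<lambda>h :: 'a \<Rightarrow> 'b. \<exists>a v. smooth_on V a \<and> smooth_on V v \<and> h = (\<lambda>x. a x *\<^sub>R v x)"
  have derivative: "((\<lambda>x. a x *\<^sub>R v x) has_derivative (\<lambda>y. a x *\<^sub>R frechet_derivative v (at x) y +
      frechet_derivative a (at x) y *\<^sub>R v x)) (at x)"
    if "smooth_on V a" "smooth_on V v" "x \<in> V" for a :: "'a \<Rightarrow> real" and v :: "'a \<Rightarrow> 'b" and x
    using has_derivative_scaleR[OF smooth_on_has_derivative[OF that(1,3)]
        smooth_on_has_derivative[OF that(2,3)]] .
  have "smooth_on V (\<lambda>x. \<Sum>h\<leftarrow>[\<lambda>x. a x *\<^sub>R v x]. h x)"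
  proof (rule smooth_on_sum_class_coinduct[OF V, where P="?P"])
    show "h differentiable at x" if "?P h" "x \<in> V" for h x
      using that derivative differentiableI by blast
    show "\<exists>gs. set gs \<subseteq> Collect ?P \<and> (\<forall>x\<in>V. frechet_derivative h (at x) b = (\<Sum>g\<leftarrow>gs. g x))"
      if "?P h" "b \<in> Basis" for h b
    proof -
      from that obtain a v where av: "smooth_on V a" "smooth_on V v" "h = (\<lambda>x. a x *\<^sub>R v x)" by auto
      have "frechet_derivative h (at x) b =
          frechet_derivative a (at x) b *\<^sub>R v x + a x *\<^sub>R frechet_derivative v (at x) b" if "x \<in> V" for x
        unfolding av(3) by (simp add: frechet_derivative_apply[OF derivative[OF av(1,2) that]])
      then show ?thesis
        using smooth_on_partial_derivative[OF av(1) \<open>b \<in> Basis\<close>]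
          smooth_on_partial_derivative[OF av(2) \<open>b \<in> Basis\<close>] av
        by (intro exI[of _ "[\<lambda>x. frechet_derivative a (at x) b *\<^sub>R v x,
          \<lambda>x. a x *\<^sub>R frechet_derivative v (at x) b]"]) auto
    qed
  qed (use assms in auto)
  then show ?thesis by simp
qed

lemma smooth_on_mult:
  fixes a b :: "'a::euclidean_space \<Rightarrow> real"
  shows "open V \<Longrightarrow> smooth_on V a \<Longrightarrow> smooth_on V b \<Longrightarrow> smooth_on V (\<lambda>x. a x * b x)"
  using smooth_on_scaleR[of V a b] by simp

lemma smooth_on_continuous_on: "smooth_on V f \<Longrightarrow> continuous_on V f"
  by (intro continuous_at_imp_continuous_on ballI differentiable_imp_continuous_within
      smooth_on_differentiable)

lemma linear_eq_sum_Basis: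
  fixes M :: "'a::euclidean_space \<Rightarrow> 'b::real_vector"
  assumes "linear M" shows "M v = (\<Sum>b\<in>Basis. (v \<bullet> b) *\<^sub>R M b)"
proof -
  have "M v = M (\<Sum>b\<in>Basis. (v \<bullet> b) *\<^sub>R b)" by (simp add: euclidean_representation)
  then show ?thesis by (simp add: linear_sum[OF assms] linear_scale[OF assms] o_def)
qed

lemma frechet_derivative_eq_sum_Basis:
  fixes f :: "'a::euclidean_space \<Rightarrow> 'b::real_normed_vector"
  shows "f differentiable at x \<Longrightarrow>
    frechet_derivative f (at x) v = (\<Sum>b\<in>Basis. (v \<bullet> b) *\<^sub>R frechet_derivative f (at x) b)"
  by (rule linear_eq_sum_Basis[OF linear_frechet_derivative])

lemma has_derivative_scaleR_comp:
  fixes a :: "'a::real_normed_vector \<Rightarrow> real" and F :: "'a \<Rightarrow> 'c::real_normed_vector"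
    and K :: "'c \<Rightarrow> 'b::real_normed_vector"
  assumes "a differentiable at x" "F differentiable at x" "K differentiable at (F x)"
  shows "((\<lambda>x. a x *\<^sub>R K (F x)) has_derivative (\<lambda>y.
    a x *\<^sub>R frechet_derivative K (at (F x)) (frechet_derivative F (at x) y) +
    frechet_derivative a (at x) y *\<^sub>R K (F x))) (at x)"
  using has_derivative_scaleR[OF assms(1)[unfolded frechet_derivative_works]
      has_derivative_compose[OF assms(2,3)[unfolded frechet_derivative_works]]] .

lemma frechet_derivative_scaleR_comp:
  fixes a :: "'a::euclidean_space \<Rightarrow> real" and F :: "'a \<Rightarrow> 'c::euclidean_space"
    and K :: "'c \<Rightarrow> 'b::real_normed_vector"
  assumes "a differentiable at x" "F differentiable at x" "K differentiable at (F x)"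
  shows "frechet_derivative (\<lambda>x. a x *\<^sub>R K (F x)) (at x) b =
    frechet_derivative a (at x) b *\<^sub>R K (F x) +
    (\<Sum>b'\<in>Basis. (a x * (frechet_derivative F (at x) b \<bullet> b')) *\<^sub>R frechet_derivative K (at (F x)) b')"
  unfolding frechet_derivative_apply[OF has_derivative_scaleR_comp[OF assms]]
    frechet_derivative_eq_sum_Basis[OF assms(3), of "frechet_derivative F (at x) b"]
  by (simp add: scaleR_sum_right)

text \<open>The chain rule writes \<open>\<partial>\<^sub>b (a \<cdot> K \<circ> F)\<close> as a sum of terms of the same shape
  \<open>a' \<cdot> K' \<circ> F\<close> with smooth \<open>a'\<close> and \<open>K'\<close>.\<close>

lemma smooth_on_compose:
  fixes F :: "'a::euclidean_space \<Rightarrow> 'c::euclidean_space" and H :: "'c \<Rightarrow> 'b::real_normed_vector"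
  assumes V: "open V" and W: "open W" and "smooth_on W H" and F: "smooth_on V F"
    and FVW: "F ` V \<subseteq> W"
  shows "smooth_on V (\<lambda>x. H (F x))"
proof -
  obtain BL where BL: "set BL = (Basis :: 'c set)" "distinct BL"
    using finite_distinct_list[OF finite_Basis] by blast
  let ?P = "\<lambda>h :: 'a \<Rightarrow> 'b. \<exists>a (K :: 'c \<Rightarrow> 'b). smooth_on V a \<and> smooth_on W K \<and>
    h = (\<lambda>x. a x *\<^sub>R K (F x))"
  have differentiable: "a differentiable at x" "F differentiable at x" "K differentiable at (F x)"
    if "smooth_on V a" "smooth_on W K" "x \<in> V" for a :: "'a \<Rightarrow> real" and K :: "'c \<Rightarrow> 'b" and x
    using that FVW F by (auto intro: smooth_on_differentiable)
  have "smooth_on V (\<lambda>x. \<Sum>h\<leftarrow>[\<lambda>x. 1 *\<^sub>R H (F x)]. h x)"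
  proof (rule smooth_on_sum_class_coinduct[OF V, where P="?P"])
    show "h differentiable at x" if "?P h" "x \<in> V" for h x
      using that has_derivative_scaleR_comp[OF differentiable] differentiableI by blast
    show "\<exists>gs. set gs \<subseteq> Collect ?P \<and> (\<forall>x\<in>V. frechet_derivative h (at x) b = (\<Sum>g\<leftarrow>gs. g x))"
      if "?P h" "b \<in> Basis" for h b
    proof -
      from that obtain a K where aK: "smooth_on V a" "smooth_on W K" "h = (\<lambda>x. a x *\<^sub>R K (F x))"
        by auto
      let ?gs = "(\<lambda>x. frechet_derivative a (at x) b *\<^sub>R K (F x)) #
        map (\<lambda>b' x. (a x * (frechet_derivative F (at x) b \<bullet> b')) *\<^sub>R frechet_derivative K (at (F x)) b') BL"
      have "frechet_derivative h (at x) b = (\<Sum>g\<leftarrow>?gs. g x)" if "x \<in> V" for x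
        unfolding aK(3) frechet_derivative_scaleR_comp[OF differentiable[OF aK(1,2) that]]
        by (simp add: sum.distinct_set_conv_list[OF BL(2)] BL(1)[symmetric] o_def)
      moreover have "set ?gs \<subseteq> Collect ?P"
      proof -
        have "?P (\<lambda>x. frechet_derivative a (at x) b *\<^sub>R K (F x))"
          using smooth_on_partial_derivative[OF aK(1) \<open>b \<in> Basis\<close>] aK(2) by blast
        moreover have "?P (\<lambda>x. (a x * (frechet_derivative F (at x) b \<bullet> b')) *\<^sub>R
            frechet_derivative K (at (F x)) b')" if "b' \<in> Basis" for b'
          using smooth_on_mult[OF V aK(1) smooth_on_inner_left[OF V smooth_on_partial_derivative[OF F
                \<open>b \<in> Basis\<close>]]] smooth_on_partial_derivative[OF aK(2) that] by blast
        ultimately show ?thesis using BL by auto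
      qed
      ultimately show ?thesis by blast
    qed
  qed (use assms smooth_on_const[OF V, of 1] in \<open>auto intro!: exI[of _ "\<lambda>x. 1"] exI[of _ H]\<close>)
  then show ?thesis by simp
qed

section \<open>Smooth inverse functions\<close>

lemma has_derivative_linear_family_apply:
  fixes A :: "'a::real_normed_vector \<Rightarrow> 'n::euclidean_space \<Rightarrow> 'b::real_normed_vector"
  assumes "\<And>b. b \<in> Basis \<Longrightarrow> ((\<lambda>y. A y b) has_derivative DA b) (at y)"
  shows "((\<lambda>p. \<Sum>b\<in>Basis. (snd p \<bullet> b) *\<^sub>R A (fst p) b) has_derivative
    (\<lambda>q. \<Sum>b\<in>Basis. (snd q \<bullet> b) *\<^sub>R A y b + (w \<bullet> b) *\<^sub>R DA b (fst q))) (at (y, w))"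
proof (rule has_derivative_sum)
  fix b :: 'n assume "b \<in> Basis"
  then have "((\<lambda>y. A y b) has_derivative DA b) (at (fst (y, w)))" using assms by simp
  from has_derivative_compose[OF has_derivative_fst[OF has_derivative_ident] this]
  show "((\<lambda>p. (snd p \<bullet> b) *\<^sub>R A (fst p) b) has_derivative
      (\<lambda>q. (snd q \<bullet> b) *\<^sub>R A y b + (w \<bullet> b) *\<^sub>R DA b (fst q))) (at (y, w))"
    by (auto intro!: derivative_eq_intros simp: add.commute)
qed

text \<open>Apply the inverse function theorem to \<open>(y, w) \<mapsto> (y, A y w)\<close>, whose inverse is
  \<open>(y, z) \<mapsto> (y, (A y)\<^sup>-\<^sup>1 z)\<close>.\<close>

lemma has_derivative_inv_linear_family:
  fixes A :: "'n::euclidean_space \<Rightarrow> 'n \<Rightarrow> 'n"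
  assumes U: "open U" and x: "x \<in> U"
    and linear: "\<And>y. y \<in> U \<Longrightarrow> linear (A y)" and inj: "\<And>y. y \<in> U \<Longrightarrow> inj (A y)"
    and columns: "\<And>b y. b \<in> Basis \<Longrightarrow> y \<in> U \<Longrightarrow> ((\<lambda>y. A y b) has_derivative DA b y) (at y)"
  shows "((\<lambda>y. inv (A y) c) has_derivative
    (\<lambda>h. inv (A x) (- (\<Sum>b\<in>Basis. (inv (A x) c \<bullet> b) *\<^sub>R DA b x h)))) (at x)"
proof -
  define S where "S = U \<times> (UNIV :: 'n set)"
  define G where "G p = (fst p, \<Sum>b\<in>Basis. (snd p \<bullet> b) *\<^sub>R A (fst p) b)" for p :: "'n \<times> 'n"
  define G' where "G' y w q = (fst q, \<Sum>b\<in>Basis. (snd q \<bullet> b) *\<^sub>R A y b + (w \<bullet> b) *\<^sub>R DA b y (fst q))"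
    for y w :: 'n and q :: "'n \<times> 'n"
  define Ginv where "Ginv q = (fst q, inv (A (fst q)) (snd q))" for q :: "'n \<times> 'n"
  have expand: "A y u = (\<Sum>b\<in>Basis. (u \<bullet> b) *\<^sub>R A y b)" if "y \<in> U" for y u
    using linear_eq_sum_Basis[OF linear[OF that]] .
  have A_inv: "A y (inv (A y) z) = z" "inv (A y) (A y u) = u" if "y \<in> U" for y z u
    using linear_inj_imp_surj[OF linear[OF that] inj[OF that]] inj[OF that]
    by (simp_all add: surj_f_inv_f inv_f_f)
  have G_derivative: "(G has_derivative G' y w) (at (y, w))" if "y \<in> U" for y w
    unfolding G_def G'_def
    by (intro has_derivative_Pair has_derivative_fst[OF has_derivative_ident]
        has_derivative_linear_family_apply columns \<open>y \<in> U\<close>)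
  define w where "w = inv (A x) c"
  define g' where
    "g' q = (fst q, inv (A x) (snd q - (\<Sum>b\<in>Basis. (w \<bullet> b) *\<^sub>R DA b x (fst q))))" for q :: "'n \<times> 'n"
  have "open S" "(x, w) \<in> S" unfolding S_def using U x by (auto simp: open_Times)
  moreover have "continuous_on S G"
    unfolding S_def using G_derivative
    by (intro continuous_at_imp_continuous_on) (auto dest!: has_derivative_continuous)
  moreover have "Ginv (G p) = p" if "p \<in> S" for p
    using that expand[symmetric] A_inv(2) unfolding S_def G_def Ginv_def by (cases p) auto
  moreover have "G' x w \<circ> g' = id"
    by (rule ext) (simp add: G'_def g'_def sum.distrib expand[OF x, symmetric] A_inv(1)[OF x])
  ultimately have "(Ginv has_derivative g') (at (G (x, w)))"
    using has_derivative_inverse_strong G_derivative[OF x] by blast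
  moreover have "G (x, w) = (x, c)"
    unfolding G_def w_def using expand[OF x, symmetric] A_inv(1)[OF x] by simp
  ultimately have "(Ginv has_derivative g') (at (x, c))" by simp
  from has_derivative_snd[OF has_derivative_compose[OF has_derivative_Pair[OF has_derivative_ident
        has_derivative_const] this]]
  show ?thesis unfolding Ginv_def g'_def w_def by simp
qed

inductive smooth_algebra :: "'a::euclidean_space set \<Rightarrow> ('a \<Rightarrow> real) set \<Rightarrow> ('a \<Rightarrow> real) \<Rightarrow> bool"
  for U E where
  smooth: "smooth_on U a \<Longrightarrow> smooth_algebra U E a"
| generator: "e \<in> E \<Longrightarrow> smooth_algebra U E e"
| add: "smooth_algebra U E a \<Longrightarrow> smooth_algebra U E c \<Longrightarrow> smooth_algebra U E (\<lambda>x. a x + c x)"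
| mult: "smooth_algebra U E a \<Longrightarrow> smooth_algebra U E c \<Longrightarrow> smooth_algebra U E (\<lambda>x. a x * c x)"

lemma smooth_algebra_sum:
  assumes "open U" "finite S" "\<And>i. i \<in> S \<Longrightarrow> smooth_algebra U E (g i)"
  shows "smooth_algebra U E (\<lambda>x. \<Sum>i\<in>S. g i x)"
  using assms(2,3)
  by (induction S rule: finite_induct) (auto intro: smooth_algebra.intros smooth_on_const assms(1))

lemma smooth_algebra_derivative_closed:
  assumes U: "open U"
    and differentiable: "\<And>e x. e \<in> E \<Longrightarrow> x \<in> U \<Longrightarrow> e differentiable at x"
    and partial: "\<And>e b. e \<in> E \<Longrightarrow> b \<in> Basis \<Longrightarrow>
      \<exists>g. smooth_algebra U E g \<and> (\<forall>x\<in>U. frechet_derivative e (at x) b = g x)"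
  shows "smooth_algebra U E h \<Longrightarrow> (\<forall>x\<in>U. h differentiable at x) \<and>
    (\<forall>b\<in>Basis. \<exists>g. smooth_algebra U E g \<and> (\<forall>x\<in>U. frechet_derivative h (at x) b = g x))"
proof (induction rule: smooth_algebra.induct)
  case (smooth a)
  then show ?case using smooth_on_differentiable smooth_on_partial_derivative smooth_algebra.smooth by blast
next
  case (generator e)
  then show ?case using differentiable partial by blast
next
  case (add a c)
  show ?case
  proof (intro conjI ballI)
    show "(\<lambda>x. a x + c x) differentiable at x" if "x \<in> U" for x
      using add.IH that by (auto intro: differentiable_add)
    fix b :: 'a assume "b \<in> Basis"
    with add.IH obtain ga gc where
      "smooth_algebra U E ga" "\<forall>x\<in>U. frechet_derivative a (at x) b = ga x"
      "smooth_algebra U E gc" "\<forall>x\<in>U. frechet_derivative c (at x) b = gc x"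
      by blast
    moreover have "frechet_derivative (\<lambda>x. a x + c x) (at x) b =
        frechet_derivative a (at x) b + frechet_derivative c (at x) b" if "x \<in> U" for x
      using add.IH that
      by (intro frechet_derivative_apply has_derivative_add) (auto simp: frechet_derivative_works[symmetric])
    ultimately show "\<exists>g. smooth_algebra U E g \<and> (\<forall>x\<in>U. frechet_derivative (\<lambda>x. a x + c x) (at x) b = g x)"
      by (intro exI[of _ "\<lambda>x. ga x + gc x"]) (auto intro: smooth_algebra.add)
  qed
next
  case (mult a c)
  show ?case
  proof (intro conjI ballI)
    show "(\<lambda>x. a x * c x) differentiable at x" if "x \<in> U" for x
      using mult.IH that by (auto intro: differentiable_mult)
    fix b :: 'a assume "b \<in> Basis"
    with mult.IH obtain ga gc where
      "smooth_algebra U E ga" "\<forall>x\<in>U. frechet_derivative a (at x) b = ga x"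
      "smooth_algebra U E gc" "\<forall>x\<in>U. frechet_derivative c (at x) b = gc x"
      by blast
    moreover have "frechet_derivative (\<lambda>x. a x * c x) (at x) b =
        a x * frechet_derivative c (at x) b + frechet_derivative a (at x) b * c x" if "x \<in> U" for x
      using mult.IH that
      by (intro frechet_derivative_apply has_derivative_mult) (auto simp: frechet_derivative_works[symmetric])
    ultimately show "\<exists>g. smooth_algebra U E g \<and> (\<forall>x\<in>U. frechet_derivative (\<lambda>x. a x * c x) (at x) b = g x)"
      using mult.hyps
      by (intro exI[of _ "\<lambda>x. a x * gc x + ga x * c x"]) (auto intro: smooth_algebra.add smooth_algebra.mult)
  qed
qed

lemma smooth_on_smooth_algebra:
  assumes "open U"
    and "\<And>e x. e \<in> E \<Longrightarrow> x \<in> U \<Longrightarrow> e differentiable at x"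
    and "\<And>e b. e \<in> E \<Longrightarrow> b \<in> Basis \<Longrightarrow>
      \<exists>g. smooth_algebra U E g \<and> (\<forall>x\<in>U. frechet_derivative e (at x) b = g x)"
    and "smooth_algebra U E h"
  shows "smooth_on U h"
  using smooth_on_class_coinduct[OF assms(1), where P="smooth_algebra U E"]
    smooth_algebra_derivative_closed[OF assms(1-3)] assms(4) by blast

lemma frechet_derivative_inv_linear_family_inner:
  fixes A :: "'n::euclidean_space \<Rightarrow> 'n \<Rightarrow> 'n"
  assumes U: "open U" and x: "x \<in> U"
    and linear: "\<And>y. y \<in> U \<Longrightarrow> linear (A y)" and inj: "\<And>y. y \<in> U \<Longrightarrow> inj (A y)"
    and columns: "\<And>b y. b \<in> Basis \<Longrightarrow> y \<in> U \<Longrightarrow> ((\<lambda>y. A y b) has_derivative DA b y) (at y)"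
  shows "frechet_derivative (\<lambda>y. inv (A y) c \<bullet> b') (at x) h =
    (\<Sum>b2\<in>Basis. ((-1) * (\<Sum>b\<in>Basis. (inv (A x) c \<bullet> b) * (DA b x h \<bullet> b2))) * (inv (A x) b2 \<bullet> b'))"
proof -
  have "frechet_derivative (\<lambda>y. inv (A y) c \<bullet> b') (at x) h =
      inv (A x) (- (\<Sum>b\<in>Basis. (inv (A x) c \<bullet> b) *\<^sub>R DA b x h)) \<bullet> b'"
    by (rule frechet_derivative_apply[OF bounded_linear.has_derivative[OF bounded_linear_inner_left
          has_derivative_inv_linear_family[OF assms]]])
  also have "\<dots> = (\<Sum>b2\<in>Basis. ((- (\<Sum>b\<in>Basis. (inv (A x) c \<bullet> b) *\<^sub>R DA b x h)) \<bullet> b2) *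
      (inv (A x) b2 \<bullet> b'))"
    by (rule Linear_Algebra.linear_componentwise[OF eucl.inj_linear_imp_inv_linear[OF linear[OF x] inj[OF x]]])
  finally show ?thesis by (simp add: inner_sum_left)
qed

text \<open>The entries of the inverse of \<open>Df\<close> generate an algebra closed under partial derivatives,
  by the formula \<open>\<partial>(Df\<^sup>-\<^sup>1) = - Df\<^sup>-\<^sup>1 \<cdot> \<partial>(Df) \<cdot> Df\<^sup>-\<^sup>1\<close>.\<close>

lemma smooth_on_inv_frechet_derivative:
  fixes f :: "'n::euclidean_space \<Rightarrow> 'n"
  assumes U: "open U" and f: "smooth_on U f"
    and inj: "\<And>x. x \<in> U \<Longrightarrow> inj (frechet_derivative f (at x))"
  shows "smooth_on U (\<lambda>x. inv (frechet_derivative f (at x)) c)"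
proof -
  define A where "A x = frechet_derivative f (at x)" for x
  define DA where "DA b x = frechet_derivative (\<lambda>y. A y b) (at x)" for b x
  define e where "e c b' x = inv (A x) c \<bullet> b'" for c b' x
  define E where "E = {e c b' | c b'. b' \<in> Basis}"
  have linear: "linear (A x)" if "x \<in> U" for x
    unfolding A_def using linear_frechet_derivative smooth_on_differentiable[OF f that] by blast
  have partial_A: "smooth_on U (\<lambda>x. A x b)" if "b \<in> Basis" for b
    unfolding A_def using smooth_on_partial_derivative[OF f that] .
  have columns: "((\<lambda>y. A y b) has_derivative DA b x) (at x)" if "b \<in> Basis" "x \<in> U" for b x
    unfolding DA_def using smooth_on_has_derivative[OF partial_A[OF that(1)] that(2)] .
  have generator: "smooth_algebra U E (e c b)" if "b \<in> Basis" for c b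
    using that unfolding E_def by (blast intro: smooth_algebra.generator)
  have smooth: "smooth_on U g" if "smooth_algebra U E g" for g
  proof (rule smooth_on_smooth_algebra[OF U _ _ that])
    show "g differentiable at x" if "g \<in> E" "x \<in> U" for g x
      using that bounded_linear.has_derivative[OF bounded_linear_inner_left
          has_derivative_inv_linear_family[OF U \<open>x \<in> U\<close> linear inj[folded A_def] columns]] differentiableI
      unfolding E_def e_def by blast
    show "\<exists>g'. smooth_algebra U E g' \<and> (\<forall>x\<in>U. frechet_derivative g (at x) d = g' x)"
      if "g \<in> E" "d \<in> Basis" for g d
    proof -
      from \<open>g \<in> E\<close> obtain c b' where g: "g = e c b'" "b' \<in> Basis" unfolding E_def by blast
      have partial_DA: "smooth_algebra U E (\<lambda>x. DA b x d \<bullet> b2)" if "b \<in> Basis" for b b2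
        unfolding DA_def
        by (rule smooth_algebra.smooth[OF smooth_on_inner_left[OF U
              smooth_on_partial_derivative[OF partial_A[OF that] \<open>d \<in> Basis\<close>]]])
      have inner_sum: "smooth_algebra U E (\<lambda>x. \<Sum>b\<in>Basis. e c b x * (DA b x d \<bullet> b2))" for b2
        by (intro smooth_algebra_sum[OF U finite_Basis] smooth_algebra.mult[OF generator partial_DA])
      have "smooth_algebra U E
          (\<lambda>x. \<Sum>b2\<in>Basis. ((-1) * (\<Sum>b\<in>Basis. e c b x * (DA b x d \<bullet> b2))) * e b2 b' x)"
        by (rule smooth_algebra_sum[OF U finite_Basis], rule smooth_algebra.mult[OF smooth_algebra.mult
              generator[OF g(2)]]) (rule smooth_algebra.smooth[OF smooth_on_const[OF U]], rule inner_sum)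
      moreover have "frechet_derivative g (at x) d =
          (\<Sum>b2\<in>Basis. ((-1) * (\<Sum>b\<in>Basis. e c b x * (DA b x d \<bullet> b2))) * e b2 b' x)" if "x \<in> U" for x
        unfolding g(1) e_def[abs_def]
        using frechet_derivative_inv_linear_family_inner[OF U that linear inj[folded A_def] columns] .
      ultimately show ?thesis by blast
    qed
  qed
  have "smooth_on U (\<lambda>x. \<Sum>b'\<in>Basis. e c b' x *\<^sub>R b')"
    by (rule smooth_on_sum[OF U finite_Basis], rule smooth_on_scaleR[OF U smooth[OF generator]])
      (simp_all add: smooth_on_const[OF U])
  then show ?thesis by (simp add: e_def A_def euclidean_representation)
qed

lemma smooth_on_inverse:
  fixes f :: "'n::euclidean_space \<Rightarrow> 'n"
  assumes U: "open U" and V: "open V" and hom: "homeomorphism U V f g" and f: "smooth_on U f"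
    and inj: "\<And>x. x \<in> U \<Longrightarrow> inj (frechet_derivative f (at x))"
    and g: "\<And>y. y \<in> V \<Longrightarrow> (g has_derivative inv (frechet_derivative f (at (g y)))) (at y)"
  shows "smooth_on V g"
proof (rule smooth_on_class_coinduct[OF V, where P="\<lambda>h. \<exists>K. smooth_on U K \<and> h = (\<lambda>y. K (g y))"])
  have gV: "g y \<in> U" if "y \<in> V" for y
    using hom that unfolding homeomorphism_def by auto
  have derivative: "((\<lambda>y. K (g y)) has_derivative
      (\<lambda>c. frechet_derivative K (at (g y)) (inv (frechet_derivative f (at (g y))) c))) (at y)"
    if "smooth_on U K" "y \<in> V" for K :: "'n \<Rightarrow> 'n" and y
    using has_derivative_compose[OF g[OF that(2)] smooth_on_has_derivative[OF that(1) gV[OF that(2)]]] .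
  show "h differentiable at y" if "\<exists>K. smooth_on U K \<and> h = (\<lambda>y. K (g y))" "y \<in> V" for h :: "'n \<Rightarrow> 'n" and y
    using that derivative differentiableI by blast
  show "\<exists>h'. (\<exists>K. smooth_on U K \<and> h' = (\<lambda>y. K (g y))) \<and> (\<forall>y\<in>V. frechet_derivative h (at y) c = h' y)"
    if "\<exists>K. smooth_on U K \<and> h = (\<lambda>y. K (g y))" "c \<in> Basis" for h :: "'n \<Rightarrow> 'n" and c
  proof -
    from that obtain K where K: "smooth_on U K" "h = (\<lambda>y. K (g y))" by auto
    define K' where "K' x = (\<Sum>b\<in>Basis.
      (inv (frechet_derivative f (at x)) c \<bullet> b) *\<^sub>R frechet_derivative K (at x) b)" for x
    have "smooth_on U K'"
      unfolding K'_def
      by (intro smooth_on_sum[OF U finite_Basis] smooth_on_scaleR[OF U] smooth_on_partial_derivative[OF K(1)]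
          smooth_on_inner_left[OF U] smooth_on_inv_frechet_derivative[OF U f inj])
    moreover have "frechet_derivative h (at y) c = K' (g y)" if "y \<in> V" for y
      unfolding K(2) K'_def frechet_derivative_apply[OF derivative[OF K(1) that]]
      by (rule frechet_derivative_eq_sum_Basis[OF smooth_on_differentiable[OF K(1) gV[OF that]]])
    ultimately show ?thesis by blast
  qed
qed (use assms in \<open>auto intro!: exI[of _ "\<lambda>x. x"] smooth_on_bounded_linear bounded_linear_ident\<close>)

lemma smooth_inverse_function_theorem:
  fixes f :: "'n::euclidean_space \<Rightarrow> 'n"
  assumes S: "open S" and f: "smooth_on S f" and "x \<in> S" and "inj (frechet_derivative f (at x))"
  obtains U V g where "open U" "U \<subseteq> S" "x \<in> U" "open V" "f x \<in> V"
    "homeomorphism U V f g" "smooth_on V g"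
proof -
  define f' where "f' x = Blinfun (frechet_derivative f (at x))" for x
  have f': "blinfun_apply (f' x) = frechet_derivative f (at x)" if "x \<in> S" for x
    unfolding f'_def using smooth_on_has_derivative[OF f that]
    by (simp add: bounded_linear_Blinfun_apply has_derivative_bounded_linear)
  have "continuous_on S f'"
  proof (rule continuous_on_blinfun_componentwise)
    fix b :: 'n assume "b \<in> Basis"
    then show "continuous_on S (\<lambda>x. blinfun_apply (f' x) b)"
      using smooth_on_continuous_on[OF smooth_on_partial_derivative[OF f]] f' continuous_on_cong
      by (smt (verit))
  qed
  moreover have "Blinfun (inv (frechet_derivative f (at x))) o\<^sub>L f' x = id_blinfun"
  proof -
    have "linear (frechet_derivative f (at x))"
      using linear_frechet_derivative smooth_on_differentiable[OF f \<open>x \<in> S\<close>] by blast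
    with assms(4) have "bounded_linear (inv (frechet_derivative f (at x)))"
      using eucl.inj_linear_imp_inv_linear linear_conv_bounded_linear by blast
    then show ?thesis
      using f'[OF \<open>x \<in> S\<close>] assms(4) by (intro blinfun_eqI) (simp add: bounded_linear_Blinfun_apply)
  qed
  ultimately obtain U V g g' where U: "open U" "U \<subseteq> S" "x \<in> U" "open V" "f x \<in> V"
    "homeomorphism U V f g"
    and g': "\<And>y. y \<in> V \<Longrightarrow> (g has_derivative g' y) (at y)"
      "\<And>y. y \<in> V \<Longrightarrow> g' y = inv (blinfun_apply (f' (g y)))"
    and bij: "\<And>y. y \<in> V \<Longrightarrow> bij (blinfun_apply (f' (g y)))"
    using inverse_function_theorem[OF S _ _ \<open>x \<in> S\<close>] smooth_on_has_derivative[OF f] f' by metis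
  have in_U: "g y \<in> U" "f (g y) = y" if "y \<in> V" for y
    using U(6) that unfolding homeomorphism_def by auto
  have "inj (frechet_derivative f (at u))" if "u \<in> U" for u
    using bij[of "f u"] U(2,6) f' that unfolding homeomorphism_def by (auto simp: bij_def)
  moreover have "(g has_derivative inv (frechet_derivative f (at (g y)))) (at y)" if "y \<in> V" for y
    using g'[OF that] f' in_U[OF that] U(2) by auto
  ultimately have "smooth_on V g"
    using smooth_on_inverse[OF U(1,4,6) smooth_on_subset[OF f U(2)]] by blast
  with U that show ?thesis by blast
qed

section \<open>Local left inverses of immersions\<close>

lemma inj_adjoint_shear:
  fixes L :: "'a::euclidean_space \<Rightarrow> 'b::euclidean_space"
  assumes L: "linear L" "inj L"
  shows "inj (\<lambda>p. (adjoint L (snd p), L (fst p) + snd p))"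
proof -
  have "linear (\<lambda>p. (adjoint L (snd p), L (fst p) + snd p))"
    using L(1) adjoint_linear[OF L(1)]
    by (intro linearI) (auto simp: linear_add linear_scale algebra_simps)
  moreover have "p = 0" if "adjoint L (snd p) = 0" "L (fst p) + snd p = 0" for p :: "'a \<times> 'b"
  proof -
    have "snd p = - L (fst p)" using that(2) by (simp add: eq_neg_iff_add_eq_0 add.commute)
    then have "L (fst p) \<bullet> L (fst p) = 0"
      using that(1) adjoint_clauses(1)[OF L(1), of "fst p" "L (fst p)"]
        linear_neg[OF adjoint_linear[OF L(1)]] by simp
    then have "fst p = 0" using L linear_injective_0 by auto
    then show ?thesis using \<open>snd p = - L (fst p)\<close> linear_0[OF L(1)] by (simp add: prod_eq_iff)
  qed
  ultimately show ?thesis by (simp add: linear_injective_0 zero_prod_def)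
qed

lemma smooth_on_adjoint_shear:
  fixes \<phi> L :: "'a::euclidean_space \<Rightarrow> 'b::euclidean_space"
  assumes U: "open U" and \<phi>: "smooth_on U \<phi>" and L: "linear L"
  shows "smooth_on (U \<times> UNIV) (\<lambda>p. (adjoint L (snd p), \<phi> (fst p) + snd p))"
proof -
  define S where "S = U \<times> (UNIV :: 'b set)"
  have S: "open S" unfolding S_def using U by (simp add: open_Times)
  have bl_adjoint: "bounded_linear (adjoint L)"
    using adjoint_linear[OF L] linear_conv_bounded_linear by blast
  have "smooth_on S (\<lambda>p. \<phi> (fst p))"
    by (rule smooth_on_compose[OF S U \<phi> smooth_on_bounded_linear[OF S bounded_linear_fst]])
      (auto simp: S_def)
  from smooth_on_add[OF S this smooth_on_bounded_linear[OF S bounded_linear_snd]]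
  have "smooth_on S (\<lambda>p. (0::'a, \<phi> (fst p) + snd p))"
    by (rule smooth_on_bounded_linear_comp[OF S, rotated])
      (intro bounded_linear_Pair bounded_linear_zero bounded_linear_ident)
  moreover have "smooth_on S (\<lambda>p. (adjoint L (snd p), 0::'b))"
    by (rule smooth_on_bounded_linear[OF S])
      (intro bounded_linear_Pair bounded_linear_compose[OF bl_adjoint bounded_linear_snd] bounded_linear_zero)
  ultimately show ?thesis
    using smooth_on_add[OF S] unfolding S_def by fastforce
qed

text \<open>Near a point where \<open>D\<phi>\<close> is injective, \<open>\<Theta>(u, z) = (D\<phi>\<^sup>* z, \<phi> u + z)\<close> is a local
  diffeomorphism with \<open>\<Theta>(u, 0) = (0, \<phi> u)\<close>, so \<open>\<phi>\<close> has the smooth left inverse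
  \<open>y \<mapsto> fst (\<Theta>\<^sup>-\<^sup>1 (0, y))\<close>.\<close>

lemma immersion_local_left_inverse:
  fixes \<phi> :: "'a::euclidean_space \<Rightarrow> 'b::euclidean_space"
  assumes U: "open U" and \<phi>: "smooth_on U \<phi>" and x: "x \<in> U" and inj: "inj (frechet_derivative \<phi> (at x))"
  obtains W D \<psi> where "open W" "x \<in> W" "W \<subseteq> U" "open D" "smooth_on D \<psi>"
    "\<And>u. u \<in> W \<Longrightarrow> \<phi> u \<in> D \<and> \<psi> (\<phi> u) = u"
proof -
  define L where "L = frechet_derivative \<phi> (at x)"
  have L: "(\<phi> has_derivative L) (at x)" unfolding L_def using smooth_on_has_derivative[OF \<phi> x] .
  define \<Theta> where "\<Theta> p = (adjoint L (snd p), \<phi> (fst p) + snd p)" for p :: "'a \<times> 'b"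
  define S where "S = U \<times> (UNIV :: 'b set)"
  have S: "open S" unfolding S_def using U by (simp add: open_Times)
  have \<Theta>: "smooth_on S \<Theta>"
    unfolding S_def \<Theta>_def[abs_def] using smooth_on_adjoint_shear[OF U \<phi> has_derivative_linear[OF L]] .
  have bl_adjoint: "bounded_linear (adjoint L)"
    using adjoint_linear[OF has_derivative_linear[OF L]] linear_conv_bounded_linear by blast
  have "(\<Theta> has_derivative (\<lambda>q. (adjoint L (snd q), L (fst q) + snd q))) (at (x, 0))"
    unfolding \<Theta>_def using has_derivative_compose[OF has_derivative_fst[OF has_derivative_ident], of \<phi> L "(x, 0)"] L
    by (auto intro!: derivative_eq_intros bounded_linear.has_derivative[OF bl_adjoint])
  then have "inj (frechet_derivative \<Theta> (at (x, 0)))"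
    using inj_adjoint_shear[OF has_derivative_linear[OF L] inj[folded L_def]]
    by (simp add: frechet_derivative_at[symmetric])
  moreover have "(x, 0) \<in> S" using x S_def by auto
  ultimately obtain U' N \<Gamma> where U': "open U'" "U' \<subseteq> S" "(x, 0) \<in> U'" "open N"
      "homeomorphism U' N \<Theta> \<Gamma>" "smooth_on N \<Gamma>"
    using smooth_inverse_function_theorem[OF S \<Theta>] by metis
  define D where "D = (\<lambda>y. (0, y)) -` N"
  define W where "W = U \<inter> (\<lambda>u. (u, 0)) -` U'"
  have D: "open D" unfolding D_def by (rule continuous_open_vimage[OF U'(4)]) (intro continuous_intros)
  have "bounded_linear (\<lambda>y::'b. (0::'a, y))"
    by (intro bounded_linear_Pair bounded_linear_zero bounded_linear_ident)
  from smooth_on_compose[OF D U'(4) U'(6) smooth_on_bounded_linear[OF D this]]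
  have \<Gamma>: "smooth_on D (\<lambda>y. \<Gamma> (0, y))" by (auto simp: D_def)
  have "open W" unfolding W_def
    by (intro open_Int U continuous_open_vimage[OF U'(1)]) (intro continuous_intros)
  moreover have "smooth_on D (\<lambda>y. fst (\<Gamma> (0, y)))"
    using smooth_on_bounded_linear_comp[OF D bounded_linear_fst \<Gamma>] .
  moreover have "\<phi> u \<in> D \<and> fst (\<Gamma> (0, \<phi> u)) = u" if "u \<in> W" for u
  proof -
    have "\<Theta> (u, 0) = (0, \<phi> u)"
      unfolding \<Theta>_def using linear_0[OF adjoint_linear[OF has_derivative_linear[OF L]]] by simp
    moreover have "(u, 0) \<in> U'" using that W_def by auto
    ultimately show ?thesis using U'(5) unfolding homeomorphism_def D_def by force
  qed
  moreover have "x \<in> W" "W \<subseteq> U" using x U'(3) W_def by auto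
  ultimately show ?thesis using that D by blast
qed

lemma C_infty_subset_A_infty: "C_infty Y \<subseteq> A_infty Y"
proof
  fix f assume f: "f \<in> C_infty Y"
  show "f \<in> A_infty Y" unfolding A_infty_def
  proof (intro CollectI allI impI, elim conjE)
    fix c :: "real \<Rightarrow> 'a" assume c: "smooth_on UNIV c" "range c \<subseteq> Y"
    have "smooth_on UNIV (\<lambda>t. f (c t))"
    proof (rule smooth_on_local)
      fix t :: real
      obtain V F where VF: "open V" "c t \<in> V" "smooth_on V F" "\<forall>z\<in>V \<inter> Y. F z = f z"
        using f c(2) unfolding C_infty_def by blast
      define T where "T = c -` V"
      have T: "open T"
        unfolding T_def using continuous_on_open_vimage[OF open_UNIV] smooth_on_continuous_on[OF c(1)] VF(1)
        by auto
      have "smooth_on T (\<lambda>t. F (c t))"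
        by (rule smooth_on_compose[OF T VF(1,3) smooth_on_subset[OF c(1)]]) (auto simp: T_def)
      then have "smooth_on T (\<lambda>t. f (c t))"
        by (rule smooth_on_cong[OF T]) (use VF(4) c(2) T_def in auto)
      then show "\<exists>W. open W \<and> t \<in> W \<and> smooth_on W (\<lambda>t. f (c t))"
        using T VF(2) T_def by blast
    qed
    then show "smooth_on UNIV (f \<circ> c)" by (simp add: o_def)
  qed
qed

lemma A_infty_comp_smooth:
  assumes "open U" "X \<subseteq> U" "smooth_on U \<phi>" "g \<in> A_infty (\<phi> ` X)"
  shows "g \<circ> \<phi> \<in> A_infty X"
  unfolding A_infty_def
proof (intro CollectI allI impI, elim conjE)
  fix c :: "real \<Rightarrow> 'a" assume c: "smooth_on UNIV c" "range c \<subseteq> X"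
  have "smooth_on UNIV (\<lambda>t. \<phi> (c t))"
    by (rule smooth_on_compose[OF open_UNIV assms(1,3) c(1)]) (use c(2) assms(2) in auto)
  moreover have "range (\<lambda>t. \<phi> (c t)) \<subseteq> \<phi> ` X" using c(2) by auto
  ultimately show "smooth_on UNIV (g \<circ> \<phi> \<circ> c)"
    using assms(4) unfolding A_infty_def by (simp add: o_def)
qed

lemma C_infty_image_embedding:
  assumes U: "open U" and XU: "X \<subseteq> U" and \<phi>: "smooth_embedding U \<phi>" and g: "g \<circ> \<phi> \<in> C_infty X"
  shows "g \<in> C_infty (\<phi> ` X)"
  unfolding C_infty_def
proof (intro CollectI ballI)
  obtain \<psi> where hom: "homeomorphism U (\<phi> ` U) \<phi> \<psi>"
    using \<phi> unfolding smooth_embedding_def by auto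
  have \<phi>_smooth: "smooth_on U \<phi>" and inj: "\<And>x. x \<in> U \<Longrightarrow> inj (frechet_derivative \<phi> (at x))"
    using \<phi> unfolding smooth_embedding_def by auto
  fix y assume "y \<in> \<phi> ` X"
  then obtain x where x: "x \<in> X" "y = \<phi> x" by auto
  with XU have "x \<in> U" by auto
  obtain V F where VF: "open V" "x \<in> V" "smooth_on V F" "\<forall>z\<in>V \<inter> X. F z = g (\<phi> z)"
    using g x(1) unfolding C_infty_def by auto
  obtain W D \<psi>' where W: "open W" "x \<in> W" "W \<subseteq> U" "open D" "smooth_on D \<psi>'"
    "\<And>u. u \<in> W \<Longrightarrow> \<phi> u \<in> D \<and> \<psi>' (\<phi> u) = u"
    using immersion_local_left_inverse[OF U \<phi>_smooth \<open>x \<in> U\<close> inj[OF \<open>x \<in> U\<close>]] by blast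
  have "openin (top_of_set U) (W \<inter> V)"
    using W(1,3) VF(1) by (auto simp: openin_open intro!: exI[of _ "W \<inter> V"])
  then have "openin (top_of_set (\<phi> ` U)) (\<phi> ` (W \<inter> V))"
    by (rule homeomorphism_imp_open_map[OF hom])
  then obtain T where T: "open T" "\<phi> ` (W \<inter> V) = \<phi> ` U \<inter> T" unfolding openin_open by blast
  define N where "N = T \<inter> (D \<inter> \<psi>' -` V)"
  have "open N"
    unfolding N_def using continuous_open_preimage[OF smooth_on_continuous_on[OF W(5)] W(4) VF(1)] T(1)
    by (simp add: Int_commute open_Int)
  moreover have "y \<in> N"
    using x W(2,6) VF(2) T(2) unfolding N_def by auto
  moreover have "smooth_on N (\<lambda>z. F (\<psi>' z))"
    by (rule smooth_on_compose[OF \<open>open N\<close> VF(1,3) smooth_on_subset[OF W(5)]]) (auto simp: N_def)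
  moreover have "F (\<psi>' z) = g z" if "z \<in> N \<inter> \<phi> ` X" for z
  proof -
    from that obtain x' where x': "x' \<in> X" "z = \<phi> x'" by blast
    have "z \<in> \<phi> ` (W \<inter> V)" using that T(2) x' XU unfolding N_def by auto
    then obtain x'' where x'': "x'' \<in> W \<inter> V" "z = \<phi> x''" by auto
    have "x' \<in> U" "x'' \<in> U" using x'(1) x''(1) XU W(3) by auto
    then have "x' = x''"
      using x'(2) x''(2) hom unfolding homeomorphism_def by metis
    then show ?thesis using x' x'' W(6) VF(4) by auto
  qed
  ultimately show "\<exists>V F. open V \<and> y \<in> V \<and> smooth_on V F \<and> (\<forall>z\<in>V \<inter> \<phi> ` X. F z = g z)"
    by blast
qed

theorem proposition1p20:
  fixes X U :: "'a::euclidean_space set" and \<phi> :: "'a \<Rightarrow> 'b::euclidean_space"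
  assumes "A_infty_admissible X"
    and "open U" and "X \<subseteq> U"
    and "smooth_embedding U \<phi>"
  shows "A_infty_admissible (\<phi> ` X)"
proof -
  have "g \<in> C_infty (\<phi> ` X)" if "g \<in> A_infty (\<phi> ` X)" for g
  proof -
    have "g \<circ> \<phi> \<in> A_infty X"
      using A_infty_comp_smooth[OF assms(2,3) _ that] assms(4) unfolding smooth_embedding_def by blast
    then have "g \<circ> \<phi> \<in> C_infty X"
      using assms(1) unfolding A_infty_admissible_def by simp
    then show ?thesis by (rule C_infty_image_embedding[OF assms(2-4)])
  qed
  then show ?thesis
    using C_infty_subset_A_infty unfolding A_infty_admissible_def by blast
qed

end
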